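(* Let $R>0$ and $\phi\in C_c^\infty(\mathbb R)$ be non-negative and even with $\mathrm{supp}(\phi)=[-R,R]$ and $\phi>0$ on $(-R,R)$; let $\psi(x)=\int_{-\infty}^xy\phi(y)\,dy$. Let $N\in\mathbb N$, weights $\omega^i\in[0,1]$ with $\sum_i\omega^i=1$, and $x_0^i\in\mathbb R$ with $\sup_{i,j}|x_0^i-x_0^j|<R$. For $i=1,\dots,N$ let $x^i$ be the unique global solutions of $$\frac{d}{dt}x^i=-\sum_{j=1}^N\omega^j\psi'(x^i-x^j),\qquad x^i(0)=x_0^i.$$ Then there exists a constant $K>0$ depending only on $\psi$ such that $|x^i(t)-x^j(t)|\ge|x_0^i-x_0^j|e^{-Kt}$ for all $i,j=1,\dots,N$ and all $t>0$. *)

theory Defs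
  imports "HOL-Analysis.Analysis"
begin

definition smooth_real :: "(real \<Rightarrow> real) \<Rightarrow> bool" where
  "smooth_real f \<longleftrightarrow> (\<forall>k x. ((deriv ^^ k) f) differentiable (at x))"

definition supp_real :: "(real \<Rightarrow> real) \<Rightarrow> real set" where
  "supp_real f = closure {x. f x \<noteq> 0}"

end

theory Submission
  imports Defs
begin

text \<open>The interaction kernel \<open>\<psi>' y = y * \<phi> y\<close> is continuously differentiable with compact
  support, hence globally Lipschitz with some constant \<open>K\<close>. Since the weights form a convex
  combination, the velocities of two particles then differ by at most \<open>K\<close> times their distance,
  so \<open>d = x\<^sup>i - x\<^sup>j\<close> satisfies \<open>\<bar>d'\<bar> \<le> K \<bar>d\<bar>\<close> and \<open>d\<^sup>2 * exp (2 K t)\<close> is nondecreasing.\<close>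

lemma smooth_real_has_real_derivative:
  assumes "smooth_real f"
  shows "(f has_real_derivative deriv f x) (at x)"
  using assms unfolding smooth_real_def by (metis funpow_0 DERIV_deriv_iff_real_differentiable)

lemma smooth_real_deriv:
  assumes "smooth_real f"
  shows "smooth_real (deriv f)"
  unfolding smooth_real_def
proof (intro allI)
  fix k x
  have "(deriv ^^ Suc k) f differentiable (at x)"
    using assms unfolding smooth_real_def by blast
  then show "(deriv ^^ k) (deriv f) differentiable (at x)"
    by (simp only: funpow_Suc_right o_apply)
qed

lemma smooth_real_continuous_on:
  assumes "smooth_real f"
  shows "continuous_on S f"
  using smooth_real_has_real_derivative[OF assms]
  by (intro continuous_at_imp_continuous_on ballI DERIV_isCont)

lemma supp_real_vanishes:
  assumes "x \<notin> supp_real f"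
  shows "f x = 0"
  using assms closure_subset[of "{y. f y \<noteq> 0}"] unfolding supp_real_def by auto

lemma deriv_vanishes_outside_supp_real:
  assumes "(f has_real_derivative f') (at x)" and "x \<notin> supp_real f"
  shows "f' = 0"
proof -
  have "open (- supp_real f)"
    unfolding supp_real_def by blast
  then have "(f has_real_derivative 0) (at x)"
    using has_field_derivative_transform_within_open[of "\<lambda>_. 0" 0 x "- supp_real f" f]
      assms(2) supp_real_vanishes[of _ f] by simp
  with assms(1) show ?thesis
    by (rule DERIV_unique)
qed

lemma lipschitz_of_continuous_deriv_bounded_support:
  fixes f f' :: "real \<Rightarrow> real"
  assumes der: "\<And>x. (f has_real_derivative f' x) (at x)"
    and cont: "continuous_on UNIV f'"
    and bdd: "bounded {x. f x \<noteq> 0}"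
  shows "\<exists>B>0. B-lipschitz_on UNIV f"
proof -
  have "compact (supp_real f)"
    using bdd unfolding supp_real_def by simp
  then have "compact (f' ` supp_real f)"
    by (rule compact_continuous_image[OF continuous_on_subset[OF cont subset_UNIV]])
  from compact_imp_bounded[OF this]
  obtain B where "B > 0" and B: "\<forall>y \<in> f' ` supp_real f. norm y \<le> B"
    unfolding bounded_pos by blast
  have bound: "\<bar>f' x\<bar> \<le> B" for x
  proof (cases "x \<in> supp_real f")
    case True
    with B show ?thesis by simp
  next
    case False
    with \<open>B > 0\<close> show ?thesis
      using deriv_vanishes_outside_supp_real[OF der] by simp
  qed
  have "\<bar>f a - f b\<bar> \<le> B * \<bar>a - b\<bar>" for a b
    using field_differentiable_bound[of UNIV f f' B a b] der bound by simp
  with \<open>B > 0\<close> show ?thesis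
    by (intro exI[of _ B] conjI lipschitz_onI) (auto simp: dist_real_def)
qed

lemma integral_atMost_eq_integral_atLeastAtMost:
  fixes g :: "real \<Rightarrow> real"
  assumes "\<And>y. y < a \<Longrightarrow> g y = 0"
  shows "integral {..x} g = integral {a..x} g"
proof -
  have empty: "{u \<in> {a..x} - {..x}. g u \<noteq> 0} = {}" "{u \<in> {..x} - {a..x}. g u \<noteq> 0} = {}"
    using assms by (auto simp: not_le)
  have "(g has_integral I) {a..x} \<longleftrightarrow> (g has_integral I) {..x}" for I
    by (rule has_integral_spike_set_eq) (simp_all only: empty negligible_empty)
  then show ?thesis
    unfolding integral_def integrable_on_def by simp
qed

lemma has_real_derivative_integral_atMost:
  fixes g :: "real \<Rightarrow> real"
  assumes cont: "continuous_on UNIV g" and vanish: "\<And>y. y < a \<Longrightarrow> g y = 0"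
  shows "((\<lambda>x. integral {..x} g) has_real_derivative g x) (at x)"
proof -
  define c where "c = min a x - 1"
  have "(\<lambda>x. integral {..x} g) = (\<lambda>x. integral {c..x} g)"
    using integral_atMost_eq_integral_atLeastAtMost[of c g] vanish by (auto simp: c_def)
  moreover have "((\<lambda>y. integral {c..y} g) has_real_derivative g x) (at x within {c..x + 1})"
    using cont by (intro integral_has_real_derivative) (auto simp: c_def intro: continuous_on_subset)
  then have "((\<lambda>y. integral {c..y} g) has_real_derivative g x) (at x)"
    by (simp add: at_within_Icc_at c_def)
  ultimately show ?thesis
    by simp
qed

lemma convex_combination_lipschitz_diff:
  fixes g :: "real \<Rightarrow> real" and w y :: "'i \<Rightarrow> real"
  assumes lip: "B-lipschitz_on UNIV g"
    and w_nonneg: "\<And>k. k \<in> A \<Longrightarrow> 0 \<le> w k" and w_sum: "sum w A = 1"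
  shows "\<bar>(\<Sum>k\<in>A. w k * g (a - y k)) - (\<Sum>k\<in>A. w k * g (b - y k))\<bar> \<le> B * \<bar>a - b\<bar>"
proof -
  have g_diff: "\<bar>g (a - c) - g (b - c)\<bar> \<le> B * \<bar>a - b\<bar>" for c
    using lipschitz_onD[OF lip, of "a - c" "b - c"] by (simp add: dist_real_def)
  have "\<bar>(\<Sum>k\<in>A. w k * g (a - y k)) - (\<Sum>k\<in>A. w k * g (b - y k))\<bar>
      \<le> (\<Sum>k\<in>A. w k * \<bar>g (a - y k) - g (b - y k)\<bar>)"
    using w_nonneg by (simp add: sum_subtractf[symmetric] right_diff_distrib[symmetric]
        order_trans[OF sum_abs] abs_mult)
  also have "\<dots> \<le> (\<Sum>k\<in>A. w k * (B * \<bar>a - b\<bar>))"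
    using g_diff w_nonneg by (intro sum_mono mult_left_mono) auto
  also have "\<dots> = B * \<bar>a - b\<bar>"
    using w_sum by (simp add: sum_distrib_right[symmetric])
  finally show ?thesis .
qed

lemma nonneg_deriv_within_imp_nondecreasing:
  fixes F F' :: "real \<Rightarrow> real"
  assumes "\<And>s. 0 \<le> s \<Longrightarrow> (F has_real_derivative F' s) (at s within {0..})"
    and "\<And>s. 0 \<le> s \<Longrightarrow> 0 \<le> F' s" and "0 \<le> t"
  shows "F 0 \<le> F t"
proof -
  have "(F has_derivative (*) (F' s)) (at s within {0..t})" if "0 \<le> s" for s
    using has_field_derivative_subset[OF assms(1)[OF that], of "{0..t}"]
    by (auto simp: has_field_derivative_def)
  then obtain \<xi> where "\<xi> \<in> {0..t}" and "F t - F 0 = F' \<xi> * t"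
    using mvt_very_simple[OF \<open>0 \<le> t\<close>, of F "\<lambda>s. (*) (F' s)"] by auto
  moreover have "0 \<le> F' \<xi> * t"
    using assms(2,3) \<open>\<xi> \<in> {0..t}\<close> by simp
  ultimately show ?thesis
    by linarith
qed

lemma abs_ge_exp_of_abs_deriv_le:
  fixes d D :: "real \<Rightarrow> real"
  assumes der: "\<And>s. 0 \<le> s \<Longrightarrow> (d has_real_derivative D s) (at s within {0..})"
    and bound: "\<And>s. 0 \<le> s \<Longrightarrow> \<bar>D s\<bar> \<le> K * \<bar>d s\<bar>"
    and "0 \<le> t"
  shows "\<bar>d 0\<bar> * exp (- K * t) \<le> \<bar>d t\<bar>"
proof -
  define F where "F s = (d s)\<^sup>2 * exp (2 * K * s)" for s
  define F' where "F' s = 2 * (d s * D s + K * (d s)\<^sup>2) * exp (2 * K * s)" for s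
  have "(F has_real_derivative F' s) (at s within {0..})" if "0 \<le> s" for s
    unfolding F_def F'_def
    by (rule derivative_eq_intros der[OF that] refl | simp add: algebra_simps)+
  moreover have "0 \<le> F' s" if "0 \<le> s" for s
  proof -
    have "- (d s * D s) \<le> \<bar>d s\<bar> * \<bar>D s\<bar>"
      by (simp add: abs_mult[symmetric])
    also have "\<dots> \<le> \<bar>d s\<bar> * (K * \<bar>d s\<bar>)"
      using bound[OF that] by (rule mult_left_mono) simp
    also have "\<dots> = K * (d s)\<^sup>2"
      by (simp add: power2_eq_square algebra_simps flip: abs_mult)
    finally show ?thesis
      by (simp add: F'_def)
  qed
  ultimately have "F 0 \<le> F t"
    using \<open>0 \<le> t\<close> by (rule nonneg_deriv_within_imp_nondecreasing)
  then have "(\<bar>d 0\<bar> * exp (- K * t))\<^sup>2 \<le> \<bar>d t\<bar>\<^sup>2"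
    by (simp add: F_def exp_minus power2_eq_square field_simps flip: exp_add)
  then show ?thesis
    by (rule power2_le_imp_le) simp
qed

lemma lipschitz_mult_id_smooth_bounded_support:
  assumes smooth: "smooth_real \<phi>" and bdd: "bounded {y. \<phi> y \<noteq> 0}"
  shows "\<exists>K>0. K-lipschitz_on UNIV (\<lambda>y. y * \<phi> y)"
proof (rule lipschitz_of_continuous_deriv_bounded_support)
  show "((\<lambda>y. y * \<phi> y) has_real_derivative \<phi> y + y * deriv \<phi> y) (at y)" for y
    by (auto intro!: derivative_eq_intros smooth_real_has_real_derivative[OF smooth])
  show "continuous_on UNIV (\<lambda>y. \<phi> y + y * deriv \<phi> y)"
    using smooth smooth_real_deriv[OF smooth] by (intro continuous_intros smooth_real_continuous_on)
  show "bounded {y. y * \<phi> y \<noteq> 0}"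
    by (rule bounded_subset[OF bdd]) auto
qed

lemma particle_distance_ge_exp:
  fixes g :: "real \<Rightarrow> real" and \<omega> :: "nat \<Rightarrow> real" and x :: "nat \<Rightarrow> real \<Rightarrow> real"
  assumes lip: "K-lipschitz_on UNIV g"
    and w_nonneg: "\<And>k. k < N \<Longrightarrow> 0 \<le> \<omega> k" and w_sum: "(\<Sum>k<N. \<omega> k) = 1"
    and sol: "\<And>k s. k < N \<Longrightarrow> 0 \<le> s \<Longrightarrow>
      (x k has_real_derivative - (\<Sum>l<N. \<omega> l * g (x k s - x l s))) (at s within {0..})"
    and "i < N" "j < N" "0 \<le> t"
  shows "\<bar>x i 0 - x j 0\<bar> * exp (- K * t) \<le> \<bar>x i t - x j t\<bar>"
proof -
  define v where "v k s = - (\<Sum>l<N. \<omega> l * g (x k s - x l s))" for k s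
  have "((\<lambda>s. x i s - x j s) has_real_derivative v i s - v j s) (at s within {0..})"
    if "0 \<le> s" for s
    unfolding v_def using sol \<open>i < N\<close> \<open>j < N\<close> that by (intro DERIV_diff)
  moreover have "\<bar>v i s - v j s\<bar> \<le> K * \<bar>x i s - x j s\<bar>" for s
  proof -
    have "\<bar>v i s - v j s\<bar>
        = \<bar>(\<Sum>l<N. \<omega> l * g (x i s - x l s)) - (\<Sum>l<N. \<omega> l * g (x j s - x l s))\<bar>"
      unfolding v_def by (simp add: abs_minus_commute)
    also have "\<dots> \<le> K * \<bar>x i s - x j s\<bar>"
      by (rule convex_combination_lipschitz_diff[OF lip]) (use w_nonneg w_sum in auto)
    finally show ?thesis .
  qed
  ultimately show ?thesis
    using \<open>0 \<le> t\<close> by (intro abs_ge_exp_of_abs_deriv_le[where d = "\<lambda>s. x i s - x j s"])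
qed

theorem lemma4p25:
  fixes \<phi> \<psi> :: "real \<Rightarrow> real" and R :: real
  assumes R_pos: "R > 0"
    and smooth: "smooth_real \<phi>"
    and nonneg: "\<And>y. \<phi> y \<ge> 0"
    and even: "\<And>y. \<phi> (- y) = \<phi> y"
    and supp: "supp_real \<phi> = {-R..R}"
    and pos: "\<And>y. -R < y \<Longrightarrow> y < R \<Longrightarrow> \<phi> y > 0"
    and psi_def: "\<And>x. \<psi> x = integral {..x} (\<lambda>y. y * \<phi> y)"
  shows "\<exists>K>0. \<forall>(N::nat) (\<omega>::nat \<Rightarrow> real) (x0::nat \<Rightarrow> real) (x::nat \<Rightarrow> real \<Rightarrow> real).
           (\<forall>i<N. 0 \<le> \<omega> i \<and> \<omega> i \<le> 1) \<and> (\<Sum>i<N. \<omega> i) = 1 \<and>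
           (\<forall>i<N. \<forall>j<N. \<bar>x0 i - x0 j\<bar> < R) \<and>
           (\<forall>i<N. x i 0 = x0 i \<and>
              (\<forall>t\<ge>0. (x i has_real_derivative
                  (- (\<Sum>j<N. \<omega> j * deriv \<psi> (x i t - x j t)))) (at t within {0..})))
           \<longrightarrow> (\<forall>i<N. \<forall>j<N. \<forall>t>0. \<bar>x i t - x j t\<bar> \<ge> \<bar>x0 i - x0 j\<bar> * exp (- K * t))"
proof -
  have "{y. \<phi> y \<noteq> 0} \<subseteq> supp_real \<phi>"
    using supp_real_vanishes[of _ \<phi>] by blast
  then have "bounded {y. \<phi> y \<noteq> 0}"
    unfolding supp by (rule bounded_subset[OF bounded_closed_interval])
  then obtain K where "K > 0" and K: "K-lipschitz_on UNIV (\<lambda>y. y * \<phi> y)"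
    using lipschitz_mult_id_smooth_bounded_support[OF smooth] by blast
  have psi_eq: "\<psi> = (\<lambda>x. integral {..x} (\<lambda>y. y * \<phi> y))"
    by (simp add: fun_eq_iff psi_def)
  have deriv_psi: "deriv \<psi> = (\<lambda>y. y * \<phi> y)"
    unfolding psi_eq using smooth_real_continuous_on[OF smooth] supp_real_vanishes[of _ \<phi>] supp
    by (intro ext DERIV_imp_deriv has_real_derivative_integral_atMost[where a = "-R"]
        continuous_intros) auto
  have pairwise_bound: "\<forall>i<N. \<forall>j<N. \<forall>t>0. \<bar>x i t - x j t\<bar> \<ge> \<bar>x0 i - x0 j\<bar> * exp (- K * t)"
    if w: "\<forall>k<N. 0 \<le> \<omega> k \<and> \<omega> k \<le> 1" "(\<Sum>k<N. \<omega> k) = 1"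
      and sol: "\<forall>k<N. x k 0 = x0 k \<and> (\<forall>s\<ge>0. (x k has_real_derivative
                  (- (\<Sum>l<N. \<omega> l * deriv \<psi> (x k s - x l s)))) (at s within {0..}))"
    for N :: nat and \<omega> x0 x
  proof (intro allI impI)
    fix i j and t :: real
    assume "i < N" "j < N" "0 < t"
    with w sol have "\<bar>x i 0 - x j 0\<bar> * exp (- K * t) \<le> \<bar>x i t - x j t\<bar>"
      by (intro particle_distance_ge_exp[OF K, where \<omega> = \<omega>]) (auto simp: deriv_psi)
    with sol \<open>i < N\<close> \<open>j < N\<close> show "\<bar>x i t - x j t\<bar> \<ge> \<bar>x0 i - x0 j\<bar> * exp (- K * t)"
      by simp
  qed
  show ?thesis
    by (rule exI[of _ K], rule conjI[OF \<open>K > 0\<close>], intro allI, rule impI, elim conjE)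
      (rule pairwise_bound; assumption)
qed

end
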